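(* Every quasi 4-connected graph $G$ has a star-decomposition of adhesion three whose central torso is internally 4-connected or isomorphic to $K_4$ or to $K_3$, and all of whose leaf-bags have exactly four vertices.
   Context: All graphs are finite and simple. A separation of $G$ is an unordered pair $\{A,B\}$ with $A\cup B=V(G)$ and no edge between $A\setminus B$ and $B\setminus A$; its order is $|A\cap B|$; a 3-separation has order exactly 3; it is proper if $A\setminus B\ne\emptyset\ne B\setminus A$. A graph is quasi 4-connected if it is 3-connected, has more than four vertices, and every 3-separation $\{A,B\}$ has a side ($A$ or $B$) with at most four vertices. A graph is internally 4-connected if it is 3-connected, has more than four vertices, and every proper 3-separation $\{A,B\}$ has independent separator $A\cap B$ and satisfies $|A\setminus B|=1$ or $|B\setminus A|=1$. A star-decomposition is a tree-decomposition $(T,(V_t)_{t\in T})$ whose tree $T$ is a star $K_{1,n}$ ($n\ge0$) with a designated central node $c$ (for $n=1$ either node may serve as centre); it has adhesion three if every adhesion set $V_t\cap V_{t'}$ for an edge $tt'$ of $T$ has exactly three vertices; leaf-bags are the bags $V_t$ of the leaves $t\neq c$; the central torso is the graph obtained from $G[V_c]$ by making every adhesion set $V_c\cap V_t$ a clique. *)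

theory Defs
  imports Main
begin

definition graph :: "'a set \<Rightarrow> ('a \<Rightarrow> 'a \<Rightarrow> bool) \<Rightarrow> bool" where
  "graph V E \<longleftrightarrow> finite V \<and> (\<forall>x y. E x y \<longrightarrow> x \<in> V \<and> y \<in> V)
     \<and> (\<forall>x y. E x y \<longrightarrow> E y x) \<and> (\<forall>x. \<not> E x x)"

definition connected_on :: "('a \<Rightarrow> 'a \<Rightarrow> bool) \<Rightarrow> 'a set \<Rightarrow> bool" where
  "connected_on E S \<longleftrightarrow> S \<noteq> {} \<and>
     (\<forall>x\<in>S. \<forall>y\<in>S. (\<lambda>a b. E a b \<and> a \<in> S \<and> b \<in> S)\<^sup>*\<^sup>* x y)"

definition k_connected :: "nat \<Rightarrow> 'a set \<Rightarrow> ('a \<Rightarrow> 'a \<Rightarrow> bool) \<Rightarrow> bool" where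
  "k_connected k V E \<longleftrightarrow> card V > k \<and>
     (\<forall>X. X \<subseteq> V \<and> card X < k \<longrightarrow> connected_on E (V - X))"

definition separation :: "'a set \<Rightarrow> ('a \<Rightarrow> 'a \<Rightarrow> bool) \<Rightarrow> 'a set \<Rightarrow> 'a set \<Rightarrow> bool" where
  "separation V E A B \<longleftrightarrow> A \<union> B = V \<and>
     (\<forall>x y. x \<in> A - B \<and> y \<in> B - A \<longrightarrow> \<not> E x y)"

definition quasi_4_connected :: "'a set \<Rightarrow> ('a \<Rightarrow> 'a \<Rightarrow> bool) \<Rightarrow> bool" where
  "quasi_4_connected V E \<longleftrightarrow> k_connected 3 V E \<and> card V > 4 \<and>
     (\<forall>A B. separation V E A B \<and> card (A \<inter> B) = 3 \<longrightarrow> card A \<le> 4 \<or> card B \<le> 4)"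

definition internally_4_connected :: "'a set \<Rightarrow> ('a \<Rightarrow> 'a \<Rightarrow> bool) \<Rightarrow> bool" where
  "internally_4_connected V E \<longleftrightarrow> k_connected 3 V E \<and> card V > 4 \<and>
     (\<forall>A B. separation V E A B \<and> card (A \<inter> B) = 3 \<and> A - B \<noteq> {} \<and> B - A \<noteq> {} \<longrightarrow>
        (\<forall>x\<in>A \<inter> B. \<forall>y\<in>A \<inter> B. \<not> E x y) \<and> (card (A - B) = 1 \<or> card (B - A) = 1))"

definition graph_iso :: "'a set \<Rightarrow> ('a \<Rightarrow> 'a \<Rightarrow> bool) \<Rightarrow> 'b set \<Rightarrow> ('b \<Rightarrow> 'b \<Rightarrow> bool) \<Rightarrow> bool" where
  "graph_iso V E W F \<longleftrightarrow> (\<exists>f. bij_betw f V W \<and> (\<forall>x\<in>V. \<forall>y\<in>V. E x y \<longleftrightarrow> F (f x) (f y)))"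

definition K_verts :: "nat \<Rightarrow> nat set" where "K_verts n = {..<n}"
definition K_edges :: "nat \<Rightarrow> nat \<Rightarrow> nat \<Rightarrow> bool" where
  "K_edges n x y \<longleftrightarrow> x < n \<and> y < n \<and> x \<noteq> y"

text \<open>Star-decomposition of adhesion three: central bag C (central node c) and leaf bags
  L 0, ..., L (n-1) (leaves of the star K_{1,n}).  The tree-decomposition axioms for a star:
  bags are vertex subsets, every vertex and every edge lies in some bag, and for every vertex
  the nodes whose bags contain it induce a connected subtree of the star, i.e. they include
  the centre or consist of a single leaf.\<close>
definition star_decomposition ::
  "'a set \<Rightarrow> ('a \<Rightarrow> 'a \<Rightarrow> bool) \<Rightarrow> 'a set \<Rightarrow> nat \<Rightarrow> (nat \<Rightarrow> 'a set) \<Rightarrow> bool" where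
  "star_decomposition V E C n L \<longleftrightarrow>
     C \<subseteq> V \<and> (\<forall>i<n. L i \<subseteq> V) \<and>
     C \<union> (\<Union>i<n. L i) = V \<and>
     (\<forall>x y. E x y \<longrightarrow> (x \<in> C \<and> y \<in> C) \<or> (\<exists>i<n. x \<in> L i \<and> y \<in> L i)) \<and>
     (\<forall>v\<in>V. v \<in> C \<or> (\<forall>i<n. \<forall>j<n. v \<in> L i \<and> v \<in> L j \<longrightarrow> i = j))"

definition adhesion_three :: "'a set \<Rightarrow> nat \<Rightarrow> (nat \<Rightarrow> 'a set) \<Rightarrow> bool" where
  "adhesion_three C n L \<longleftrightarrow> (\<forall>i<n. card (C \<inter> L i) = 3)"

definition central_torso :: "('a \<Rightarrow> 'a \<Rightarrow> bool) \<Rightarrow> 'a set \<Rightarrow> nat \<Rightarrow> (nat \<Rightarrow> 'a set) \<Rightarrow> 'a \<Rightarrow> 'a \<Rightarrow> bool" where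
  "central_torso E C n L x y \<longleftrightarrow> x \<in> C \<and> y \<in> C \<and>
     (E x y \<or> (x \<noteq> y \<and> (\<exists>i<n. x \<in> L i \<and> y \<in> L i)))"

end

theory Submission imports Defs begin

text \<open>Choose a maximal independent set X of degree-3 vertices and eliminate it: each z \<in> X
  becomes the leaf bag {z} \<union> N(z), and the central torso is G - X with every neighbourhood
  N(z) made a clique.  Elimination preserves connectivity, so the torso stays 3-connected.
  A proper 3-separation of the torso lifts to a 3-separation of G, one of whose sides has at
  most four vertices by quasi 4-connectivity; an inner vertex a of that side then has
  N(a) = separator, so a has degree 3 and no neighbour in X, contradicting maximality.
  Hence the torso has no proper 3-separation at all, and if it has at most four vertices it
  is complete, since removing all but two of its vertices leaves it connected.\<close>

definition independent :: "('a \<Rightarrow> 'a \<Rightarrow> bool) \<Rightarrow> 'a set \<Rightarrow> bool" where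
  "independent E X \<longleftrightarrow> (\<forall>a\<in>X. \<forall>b\<in>X. \<not> E a b)"

text \<open>The graph on V - X obtained by eliminating the vertices of X one after another;
  for independent X the order does not matter.\<close>
definition elimination :: "'a set \<Rightarrow> ('a \<Rightarrow> 'a \<Rightarrow> bool) \<Rightarrow> 'a set \<Rightarrow> 'a \<Rightarrow> 'a \<Rightarrow> bool" where
  "elimination V E X a b \<longleftrightarrow> a \<in> V - X \<and> b \<in> V - X \<and>
     (E a b \<or> (a \<noteq> b \<and> (\<exists>z\<in>X. E z a \<and> E z b)))"

lemma graph_symD: "graph V E \<Longrightarrow> E a b \<Longrightarrow> E b a"
  unfolding graph_def by blast

lemma graph_edgeD: "graph V E \<Longrightarrow> E a b \<Longrightarrow> a \<in> V \<and> b \<in> V"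
  unfolding graph_def by blast

lemma graph_irreflD: "graph V E \<Longrightarrow> \<not> E a a"
  unfolding graph_def by blast

lemma graph_finite_neighbours: "graph V E \<Longrightarrow> finite {w. E v w}"
  unfolding graph_def by (metis (no_types, lifting) finite_subset mem_Collect_eq subsetI)

lemma separation_sym: "graph V E \<Longrightarrow> separation V E A B \<Longrightarrow> separation V E B A"
  unfolding separation_def by (blast dest: graph_symD)

lemma connected_on_pair_adjacent:
  assumes "connected_on T {x, y}" and "x \<noteq> y"
  shows "T x y"
proof -
  have "z = x \<or> T x z" if "(\<lambda>a b. T a b \<and> a \<in> {x, y} \<and> b \<in> {x, y})\<^sup>*\<^sup>* x z" for z
    using that by (induction rule: rtranclp_induct) auto
  then show ?thesis using assms unfolding connected_on_def by blast
qed

lemma graph_iso_complete: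
  assumes "finite C" and "\<And>a b. T a b \<longleftrightarrow> a \<in> C \<and> b \<in> C \<and> a \<noteq> b"
  shows "graph_iso C T (K_verts (card C)) (K_edges (card C))"
proof -
  obtain h where h: "bij_betw h C {..<card C}"
    using ex_bij_betw_finite_nat[OF assms(1)] by (auto simp: atLeast0LessThan)
  then have "\<forall>x\<in>C. \<forall>y\<in>C. T x y \<longleftrightarrow> K_edges (card C) (h x) (h y)"
    using assms(2) unfolding K_edges_def bij_betw_def inj_on_def by auto
  then show ?thesis unfolding graph_iso_def K_verts_def using h by blast
qed

lemma maximal_independent_subset:
  assumes "finite D" and sym: "\<And>a b. E a b \<Longrightarrow> E b a" and irrefl: "\<And>a. \<not> E a a"
  obtains X where "X \<subseteq> D" "independent E X" "\<forall>v\<in>D - X. \<exists>z\<in>X. E v z"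
proof -
  have "\<exists>X\<subseteq>D. independent E X \<and> (\<forall>v\<in>D - X. \<exists>z\<in>X. E v z)"
    using assms(1)
  proof (induction rule: finite_induct)
    case empty
    show ?case unfolding independent_def by auto
  next
    case (insert v D)
    then obtain X where X: "X \<subseteq> D" "independent E X" "\<forall>u\<in>D - X. \<exists>z\<in>X. E u z"
      by blast
    show ?case
    proof (cases "\<exists>z\<in>X. E v z")
      case True
      then show ?thesis using X by blast
    next
      case False
      then have "independent E (insert v X)"
        using X(2) irrefl sym unfolding independent_def by blast
      then show ?thesis using X by (intro exI[of _ "insert v X"]) blast
    qed
  qed
  then show ?thesis using that by blast
qed

lemma k_connected_degree_ge:
  assumes g: "graph V E" and k: "k_connected k V E" and u: "u \<in> V"
  shows "k \<le> card {v. E u v}"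
proof (rule ccontr)
  let ?N = "{v. E u v}"
  assume "\<not> k \<le> card ?N"
  then have small: "card ?N < k" by simp
  have NV: "?N \<subseteq> V" using graph_edgeD[OF g] by blast
  have "card (insert u ?N) \<le> Suc (card ?N)"
    using graph_finite_neighbours[OF g] by (simp add: card_insert_if)
  also have "\<dots> < card V" using small k unfolding k_connected_def by linarith
  finally have "\<not> V \<subseteq> insert u ?N"
    using graph_finite_neighbours[OF g] by (meson card_mono finite_insert not_less)
  then obtain w where w: "w \<in> V" "w \<notin> insert u ?N" by blast
  have "connected_on E (V - ?N)" using k NV small unfolding k_connected_def by blast
  moreover have "u \<in> V - ?N" using u graph_irreflD[OF g] by blast
  ultimately have "(\<lambda>a b. E a b \<and> a \<in> V - ?N \<and> b \<in> V - ?N)\<^sup>*\<^sup>* u w"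
    using w unfolding connected_on_def by blast
  then show False using w by (cases rule: converse_rtranclpE) auto
qed

lemma neighbours_eq_separator:
  assumes g: "graph V E" and k: "k_connected 3 V E" and s: "separation V E A B"
    and c3: "card (A \<inter> B) = 3" and c4: "card A \<le> 4" and u: "u \<in> A - B"
  shows "{v. E u v} = A \<inter> B"
proof -
  have AV: "A \<subseteq> V" using s unfolding separation_def by auto
  then have fA: "finite A" using g finite_subset unfolding graph_def by blast
  have "card (insert u (A \<inter> B)) = 4" using c3 u fA by (simp add: card_insert_disjoint)
  then have A: "A = insert u (A \<inter> B)" using card_seteq[OF fA, of "insert u (A \<inter> B)"] c4 u by force
  have "{v. E u v} \<subseteq> A \<inter> B"
  proof
    fix v assume uv: "v \<in> {v. E u v}"
    then have "v \<in> A" using s u graph_edgeD[OF g] unfolding separation_def by blast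
    moreover have "v \<noteq> u" using uv graph_irreflD[OF g] by blast
    ultimately show "v \<in> A \<inter> B" using A by (metis insertE)
  qed
  moreover have "3 \<le> card {v. E u v}" using k_connected_degree_ge[OF g k] u AV by blast
  ultimately show ?thesis using c3 fA by (metis card_seteq finite_Int)
qed

lemma connected_on_elimination:
  assumes g: "graph V E" and X: "independent E X" and Y: "Y \<subseteq> V - X" "V - X - Y \<noteq> {}"
    and c: "connected_on E (V - Y)"
  shows "connected_on (elimination V E X) (V - X - Y)"
proof -
  let ?C = "V - X - Y"
  let ?T = "(\<lambda>a b. elimination V E X a b \<and> a \<in> ?C \<and> b \<in> ?C)\<^sup>*\<^sup>*"
  have "?T x y" if xy: "x \<in> ?C" "y \<in> ?C" for x y
  proof -
    \<comment> \<open>a path of G - Y from x stays in reach of the torso: a step through z \<in> X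
      joins the two neighbours of z on the path, which are adjacent in the torso\<close>
    have "(z \<in> ?C \<and> ?T x z) \<or> (z \<in> X \<and> (\<exists>a\<in>?C. E z a \<and> ?T x a))"
      if "(\<lambda>a b. E a b \<and> a \<in> V - Y \<and> b \<in> V - Y)\<^sup>*\<^sup>* x z" for z
      using that
    proof (induction rule: rtranclp_induct)
      case base
      then show ?case using xy by auto
    next
      case (step z z')
      then have e: "E z z'" "z' \<in> V - Y" by auto
      from step.IH show ?case
      proof
        assume z: "z \<in> ?C \<and> ?T x z"
        show ?thesis
        proof (cases "z' \<in> X")
          case True
          then show ?thesis using z e graph_symD[OF g] by blast
        next
          case False
          then have "elimination V E X z z'" using z e unfolding elimination_def by auto
          then show ?thesis using z e False rtranclp.rtrancl_into_rtrancl[of _ x z z'] by auto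
        qed
      next
        assume "z \<in> X \<and> (\<exists>a\<in>?C. E z a \<and> ?T x a)"
        then obtain a where a: "z \<in> X" "a \<in> ?C" "E z a" "?T x a" by blast
        have z': "z' \<in> ?C" using a(1) X e unfolding independent_def by auto
        show ?thesis
        proof (cases "a = z'")
          case False
          then have "elimination V E X a z'" using a z' e unfolding elimination_def by auto
          then show ?thesis using a z' rtranclp.rtrancl_into_rtrancl[of _ x a z'] by auto
        qed (use a in blast)
      qed
    qed
    moreover have "(\<lambda>a b. E a b \<and> a \<in> V - Y \<and> b \<in> V - Y)\<^sup>*\<^sup>* x y"
      using c xy unfolding connected_on_def by blast
    ultimately show ?thesis using xy by blast
  qed
  then show ?thesis using Y(2) unfolding connected_on_def by blast
qed

lemma k_connected_elimination:
  assumes g: "graph V E" and k: "k_connected k V E" and X: "independent E X"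
    and card: "k < card (V - X)"
  shows "k_connected k (V - X) (elimination V E X)"
  unfolding k_connected_def
proof (intro conjI allI impI)
  fix Y assume Y: "Y \<subseteq> V - X \<and> card Y < k"
  have "finite (V - X)" using g unfolding graph_def by blast
  then have "card (V - X) \<le> card Y" if "V - X \<subseteq> Y"
    using that Y card_mono finite_subset by metis
  then have "V - X - Y \<noteq> {}" using Y card by auto
  moreover have "connected_on E (V - Y)" using k Y unfolding k_connected_def by blast
  ultimately show "connected_on (elimination V E X) (V - X - Y)"
    using connected_on_elimination[OF g X] Y by blast
qed (use card in simp)

lemma small_elimination_complete:
  assumes g: "graph V E" and k: "k_connected 3 V E" and X: "independent E X"
    and small: "card (V - X) \<le> 4" and ab: "a \<in> V - X" "b \<in> V - X" "a \<noteq> b"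
  shows "elimination V E X a b"
proof -
  define Y where "Y = V - X - {a, b}"
  have "finite (V - X)" using g unfolding graph_def by blast
  then have "card Y = card (V - X) - 2" unfolding Y_def using ab by (simp add: card_Diff_subset)
  then have "card Y < 3" using small by linarith
  moreover have "Y \<subseteq> V" unfolding Y_def by blast
  ultimately have "connected_on E (V - Y)" using k unfolding k_connected_def by blast
  moreover have "V - X - Y = {a, b}" using ab unfolding Y_def by auto
  moreover have "Y \<subseteq> V - X" unfolding Y_def by blast
  ultimately have "connected_on (elimination V E X) {a, b}"
    using connected_on_elimination[OF g X, of Y] by simp
  then show ?thesis using ab(3) by (rule connected_on_pair_adjacent)
qed

text \<open>Each z \<in> X joins the side containing one of its torso neighbours; since N(z) is a
  torso clique, all its torso neighbours outside the separator lie on the same side.\<close>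
lemma separation_lift_elimination:
  assumes g: "graph V E" and X: "X \<subseteq> V" "independent E X"
    and s: "separation (V - X) (elimination V E X) A' B'"
  obtains A B where "separation V E A B" "A \<inter> B = A' \<inter> B'" "A' - B' \<subseteq> A - B" "B' - A' \<subseteq> B - A"
proof -
  define XA where "XA = {z\<in>X. \<exists>r\<in>A' - B'. E z r}"
  define A where "A = A' \<union> XA"
  define B where "B = B' \<union> (X - XA)"
  have AB': "A' \<union> B' = V - X"
    and noT: "\<And>p q. p \<in> A' - B' \<Longrightarrow> q \<in> B' - A' \<Longrightarrow> \<not> elimination V E X p q"
    using s unfolding separation_def by auto
  have XA: "XA \<subseteq> X" unfolding XA_def by blast
  have "\<not> E p q" if p: "p \<in> A - B" and q: "q \<in> B - A" for p q
  proof
    assume e: "E p q"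
    have "q \<notin> X - XA"
    proof
      assume qX: "q \<in> X - XA"
      then have "p \<notin> X" using e X(2) unfolding independent_def by blast
      then have "p \<in> A' - B'" using p XA unfolding A_def B_def by blast
      then show False using qX e graph_symD[OF g] unfolding XA_def by blast
    qed
    then have q': "q \<in> B' - A'" using q unfolding A_def B_def by blast
    show False
    proof (cases "p \<in> XA")
      case True
      then obtain r where r: "r \<in> A' - B'" "E p r" "p \<in> X" unfolding XA_def by blast
      then have "elimination V E X r q" using q' e AB' unfolding elimination_def by auto
      then show False using noT r q' by blast
    next
      case False
      then have "p \<in> A' - B'" using p unfolding A_def B_def by blast
      then have "elimination V E X p q" using q' e AB' unfolding elimination_def by auto
      then show False using noT \<open>p \<in> A' - B'\<close> q' by blast
    qed
  qed
  moreover have "A \<union> B = V" using AB' X(1) XA unfolding A_def B_def by blast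
  moreover have "A \<inter> B = A' \<inter> B'" using AB' XA unfolding A_def B_def by blast
  moreover have "A' - B' \<subseteq> A - B" "B' - A' \<subseteq> B - A" using AB' XA unfolding A_def B_def by blast+
  ultimately show ?thesis using that unfolding separation_def by blast
qed

lemma elimination_no_proper_3_separation:
  assumes g: "graph V E" and q: "quasi_4_connected V E" and X: "X \<subseteq> V" "independent E X"
    and maximal: "\<forall>v\<in>V - X. card {w. E v w} = 3 \<longrightarrow> (\<exists>z\<in>X. E v z)"
    and s: "separation (V - X) (elimination V E X) A' B'" and c3: "card (A' \<inter> B') = 3"
    and proper: "A' - B' \<noteq> {}" "B' - A' \<noteq> {}"
  shows False
proof -
  have k: "k_connected 3 V E" using q unfolding quasi_4_connected_def by blast
  have AB': "A' \<union> B' = V - X" using s unfolding separation_def by blast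
  obtain A B where sAB: "separation V E A B" and AB: "A \<inter> B = A' \<inter> B'"
    and inner: "A' - B' \<subseteq> A - B" "B' - A' \<subseteq> B - A"
    using separation_lift_elimination[OF g X s] by blast
  have small_side: False
    if sST: "separation V E S T" and ST: "S \<inter> T = A' \<inter> B'" and "card S \<le> 4"
      and a: "a \<in> S - T" "a \<in> V - X" for S T a
  proof -
    have N: "{w. E a w} = A' \<inter> B'"
      using neighbours_eq_separator[OF g k sST] ST c3 \<open>card S \<le> 4\<close> a(1) by simp
    then have "card {w. E a w} = 3" using c3 by simp
    then obtain z where "z \<in> X" "E a z" using maximal a(2) by blast
    then show False using N AB' by blast
  qed
  obtain a b where a: "a \<in> A' - B'" and b: "b \<in> B' - A'" using proper by blast
  have "card A \<le> 4 \<or> card B \<le> 4" using q sAB AB c3 unfolding quasi_4_connected_def by simp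
  then show False
  proof
    assume "card A \<le> 4"
    then show False using small_side[OF sAB AB] a inner(1) AB' by blast
  next
    assume "card B \<le> 4"
    moreover have "B \<inter> A = A' \<inter> B'" using AB by blast
    ultimately show False
      using small_side[OF separation_sym[OF g sAB]] b inner(2) AB' by blast
  qed
qed

lemma internally_4_connected_elimination:
  assumes g: "graph V E" and q: "quasi_4_connected V E" and X: "X \<subseteq> V" "independent E X"
    and maximal: "\<forall>v\<in>V - X. card {w. E v w} = 3 \<longrightarrow> (\<exists>z\<in>X. E v z)"
    and big: "4 < card (V - X)"
  shows "internally_4_connected (V - X) (elimination V E X)"
proof -
  have "k_connected 3 (V - X) (elimination V E X)"
    using k_connected_elimination[OF g _ X(2)] q big unfolding quasi_4_connected_def by simp
  then show ?thesis
    using elimination_no_proper_3_separation[OF g q X maximal] big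
    unfolding internally_4_connected_def by blast
qed

lemma star_decomposition_neighbourhood_leaves:
  assumes g: "graph V E" and X: "X \<subseteq> V" "independent E X" and f: "bij_betw f {..<n} X"
  shows "star_decomposition V E (V - X) n (\<lambda>i. insert (f i) {w. E (f i) w})"
proof -
  define L where "L = (\<lambda>i. insert (f i) {w. E (f i) w})"
  have fX: "f ` {..<n} = X" and finj: "inj_on f {..<n}" using f unfolding bij_betw_def by auto
  have "\<forall>i<n. L i \<subseteq> V" using fX X(1) graph_edgeD[OF g] unfolding L_def by blast
  moreover have "V - X \<union> (\<Union>i<n. L i) = V" using fX X(1) graph_edgeD[OF g] unfolding L_def by blast
  moreover have "x \<in> V - X \<and> y \<in> V - X \<or> (\<exists>i<n. x \<in> L i \<and> y \<in> L i)" if "E x y" for x y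
  proof (cases "x \<in> X \<or> y \<in> X")
    case True
    then show ?thesis using that fX graph_symD[OF g] unfolding L_def by blast
  qed (use that graph_edgeD[OF g] in blast)
  moreover have "i = j" if "v \<in> X" "i < n" "j < n" "v \<in> L i" "v \<in> L j" for v i j
  proof -
    have "v = f i" "v = f j" using that fX X(2) unfolding L_def independent_def by blast+
    then show ?thesis using finj that unfolding inj_on_def by blast
  qed
  ultimately have "star_decomposition V E (V - X) n L"
    unfolding star_decomposition_def by blast
  then show ?thesis unfolding L_def .
qed

lemma central_torso_neighbourhood_leaves:
  assumes X: "independent E X" and f: "bij_betw f {..<n} X"
  shows "central_torso E (V - X) n (\<lambda>i. insert (f i) {w. E (f i) w}) = elimination V E X"
proof (intro ext)
  fix a b
  have "f ` {..<n} = X" using f unfolding bij_betw_def by blast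
  then have "a \<in> V - X \<Longrightarrow> b \<in> V - X \<Longrightarrow>
      (\<exists>i<n. a \<in> insert (f i) {w. E (f i) w} \<and> b \<in> insert (f i) {w. E (f i) w}) \<longleftrightarrow> (\<exists>z\<in>X. E z a \<and> E z b)"
    by blast
  then show "central_torso E (V - X) n (\<lambda>i. insert (f i) {w. E (f i) w}) a b = elimination V E X a b"
    unfolding central_torso_def elimination_def by blast
qed

lemma star_decomposition_eliminating:
  assumes g: "graph V E" and X: "X \<subseteq> V" "independent E X"
    and degree: "\<forall>z\<in>X. card {w. E z w} = 3"
  obtains n L where "star_decomposition V E (V - X) n L" "adhesion_three (V - X) n L"
    "\<forall>i<n. card (L i) = 4" "central_torso E (V - X) n L = elimination V E X"
proof -
  have "finite X" using g X(1) finite_subset unfolding graph_def by blast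
  then obtain f where f: "bij_betw f {..<card X} X"
    using ex_bij_betw_nat_finite by (auto simp: atLeast0LessThan)
  then have fX: "i < card X \<Longrightarrow> f i \<in> X" for i unfolding bij_betw_def by blast
  define L where "L i = insert (f i) {w. E (f i) w}" for i
  have "(V - X) \<inter> L i = {w. E (f i) w}" if "i < card X" for i
    using fX[OF that] X(2) graph_edgeD[OF g] unfolding L_def independent_def by blast
  then have "adhesion_three (V - X) (card X) L"
    using fX degree unfolding adhesion_three_def by simp
  moreover have "\<forall>i<card X. card (L i) = 4"
    using fX degree graph_irreflD[OF g] graph_finite_neighbours[OF g]
    unfolding L_def by (simp add: card_insert_disjoint)
  ultimately show ?thesis
    using that star_decomposition_neighbourhood_leaves[OF g X f]
      central_torso_neighbourhood_leaves[OF X(2) f] unfolding L_def by blast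
qed

theorem mainTheorem11:
  fixes V :: "'a set" and E :: "'a \<Rightarrow> 'a \<Rightarrow> bool"
  assumes "graph V E" and "quasi_4_connected V E"
  shows "\<exists>C n L. star_decomposition V E C n L \<and> adhesion_three C n L \<and>
           (internally_4_connected C (central_torso E C n L)
            \<or> graph_iso C (central_torso E C n L) (K_verts 4) (K_edges 4)
            \<or> graph_iso C (central_torso E C n L) (K_verts 3) (K_edges 3)) \<and>
           (\<forall>i<n. card (L i) = 4)"
proof -
  note g = assms(1)
  have k: "k_connected 3 V E" and big: "4 < card V"
    using assms(2) unfolding quasi_4_connected_def by blast+
  have fV: "finite V" using g unfolding graph_def by blast
  let ?D = "{v\<in>V. card {w. E v w} = 3}"
  obtain X where XD: "X \<subseteq> ?D" and ind: "independent E X" and maximal: "\<forall>v\<in>?D - X. \<exists>z\<in>X. E v z"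
    using maximal_independent_subset[of ?D E] fV graph_symD[OF g] graph_irreflD[OF g] by auto
  have XV: "X \<subseteq> V" using XD by blast
  obtain n L where decomposition: "star_decomposition V E (V - X) n L" "adhesion_three (V - X) n L"
    "\<forall>i<n. card (L i) = 4" and torso: "central_torso E (V - X) n L = elimination V E X"
    using star_decomposition_eliminating[OF g XV ind] XD by blast
  have "internally_4_connected (V - X) (elimination V E X)
      \<or> graph_iso (V - X) (elimination V E X) (K_verts 4) (K_edges 4)
      \<or> graph_iso (V - X) (elimination V E X) (K_verts 3) (K_edges 3)"
  proof (cases "4 < card (V - X)")
    case True
    then show ?thesis using internally_4_connected_elimination[OF g assms(2) XV ind] maximal by blast
  next
    case False
    then have "X \<noteq> {}" using big by auto
    then obtain z where z: "z \<in> X" by blast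
    then have "{w. E z w} \<subseteq> V - X" "card {w. E z w} = 3"
      using XD ind graph_edgeD[OF g] unfolding independent_def by blast+
    then have "3 \<le> card (V - X)" using fV card_mono[of "V - X" "{w. E z w}"] by simp
    then have "card (V - X) = 3 \<or> card (V - X) = 4" using False by linarith
    moreover have "elimination V E X a b \<longleftrightarrow> a \<in> V - X \<and> b \<in> V - X \<and> a \<noteq> b" for a b
      using small_elimination_complete[OF g k ind] False graph_irreflD[OF g]
      unfolding elimination_def by auto
    ultimately show ?thesis using graph_iso_complete[of "V - X"] fV by auto
  qed
  then show ?thesis using decomposition torso by (intro exI[of _ "V - X"] exI[of _ n] exI[of _ L]) simp
qed

end
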